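(* For the SG-SAV iteration with $r_0=\sqrt{f(x_0)+c}$, assume (A.3) and (A.4). Then for every $T\ge1$: (i) $r_t>0$ for all $t$, $r_{t+1}\le r_t$, and $r_t-r_{t+1}=\frac{\eta\,r_{t+1}}{2\tilde F_t^2}\|G_t\|^2$; (ii) $\mathbb{E}\big[\sum_{t=0}^{T-1}r_{t+1}\|G_t\|^2\big]\le\frac{2\sqrt{f(x_0)+c}\,B}{\eta}$; (iii) $\mathbb{E}\big[\sum_{t=0}^{T-1}\rho_t^2\|G_t\|^2\big]\le\frac{2(f(x_0)+c)B}{a\eta}$, where $\rho_t:=r_{t+1}/\tilde F_t$; (iv) $\mathbb{E}\big[\sum_{t=0}^{T-1}r_{t+1}|\langle\nabla f(x_t)-G_t,G_t\rangle|\big]\le\sqrt T\,\sigma_0\sqrt{\frac{2(f(x_0)+c)B}{\eta}}$.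
   Context: Let $f:\mathbb{R}^d\to\mathbb{R}$ be continuously differentiable and let $c\ge0$ be a constant with $f^*:=\inf_{x}f(x)>-c$. Let $\xi_0,\xi_1,\dots$ be random variables. For each $x$ and sample $\xi$, let $f(x;\xi)$ be a stochastic function value and $G(x;\xi)\in\mathbb{R}^d$ a stochastic gradient. Write $G_t:=G(x_t;\xi_t)$ and $\tilde F_t:=\sqrt{f(x_t;\xi_t)+c}$. Given $x_0$, $r_0$ and $\eta>0$, the SG-SAV iteration defines $(x_{t+1},r_{t+1})$ as the solution of $$x_{t+1}=x_t-\eta\,\frac{r_{t+1}}{\tilde F_t}\,G_t,\qquad r_{t+1}=r_t+\frac{1}{2\tilde F_t}\langle G_t,\,x_{t+1}-x_t\rangle .$$ (A.3): $\mathbb{E}_{\xi_t}\|G_t-\nabla f(x_t)\|^2\le\sigma_0^2$ for all $t$ (conditional expectation over $\xi_t$ given $\xi_0,\dots,\xi_{t-1}$). (A.4): there are $0<a\le B$ with $a\le f(x)+c\le B$ and $a\le f(x;\xi)+c\le B$ for all $x,\xi$. *)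

theory Defs
  imports "HOL-Probability.Probability"
begin

definition past_sigma :: "'w measure \<Rightarrow> (nat \<Rightarrow> 'w \<Rightarrow> 's) \<Rightarrow> 's measure \<Rightarrow> nat \<Rightarrow> 'w measure" where
  "past_sigma M xi S t = sigma (space M) (\<Union>i<t. {xi i -` A \<inter> space M | A. A \<in> sets S})"

end

theory Submission
  imports Defs
begin

text \<open>
  Although the update is implicit in \<open>r\<close>, it is a linear equation in \<open>r\<^sub>t\<^sub>+\<^sub>1\<close> with solution
  \<open>r\<^sub>t\<^sub>+\<^sub>1 = r\<^sub>t / (1 + \<eta> \<parallel>G\<^sub>t\<parallel>\<^sup>2 / (2 F\<^sub>t\<^sup>2))\<close>; hence \<open>r\<close> stays positive and decreases, and
  the decrement \<open>r\<^sub>t - r\<^sub>t\<^sub>+\<^sub>1\<close> equals \<open>\<eta> r\<^sub>t\<^sub>+\<^sub>1 \<parallel>G\<^sub>t\<parallel>\<^sup>2 / (2 F\<^sub>t\<^sup>2)\<close>. As \<open>F\<^sub>t\<^sup>2 \<le> B\<close> and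
  \<open>r\<^sub>t\<^sub>+\<^sub>1 \<le> r\<^sub>0\<close>, the sums in (ii) and (iii) are dominated by telescoping sums of these
  decrements, pathwise and hence in expectation. For (iv), Cauchy-Schwarz and Young's
  inequality with a free weight \<open>L\<close> bound each term by
  \<open>L r\<^sub>0 \<parallel>\<nabla>f(x\<^sub>t) - G\<^sub>t\<parallel>\<^sup>2 / 2 + r\<^sub>t\<^sub>+\<^sub>1 \<parallel>G\<^sub>t\<parallel>\<^sup>2 / (2L)\<close>; the tower property turns (A.3)
  into \<open>E \<parallel>\<nabla>f(x\<^sub>t) - G\<^sub>t\<parallel>\<^sup>2 \<le> \<sigma>\<^sub>0\<^sup>2\<close>, and optimising over \<open>L\<close> gives the square-root bound.
\<close>

lemma sav_step_decrement:
  fixes g y y' :: "'a::real_inner"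
  assumes "y' = y - (\<eta> * r' / F) *\<^sub>R g"
    and "r' = r + 1 / (2 * F) * (g \<bullet> (y' - y))"
  shows "r - r' = \<eta> * r' / (2 * F\<^sup>2) * (norm g)\<^sup>2"
proof -
  have "g \<bullet> (y' - y) = - (\<eta> * r' / F) * (norm g)\<^sup>2"
    using assms(1) by (simp add: power2_norm_eq_inner)
  with assms(2) show ?thesis
    by (simp add: power2_eq_square)
qed

lemma eq_divide_if_decrement:
  fixes \<kappa> r r' :: real
  assumes "r - r' = \<kappa> * r'" and "0 \<le> \<kappa>"
  shows "r' = r / (1 + \<kappa>)"
  using assms by (simp add: field_simps)

lemma sum_le_telescope:
  fixes u r :: "nat \<Rightarrow> real"
  assumes "\<And>t. t < T \<Longrightarrow> u t \<le> K * (r t - r (Suc t))"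
  shows "(\<Sum>t<T. u t) \<le> K * (r 0 - r T)"
proof -
  have "(\<Sum>t<T. u t) \<le> (\<Sum>t<T. K * (r t - r (Suc t)))"
    using assms by (intro sum_mono) auto
  also have "\<dots> = K * (r 0 - r T)"
    by (simp only: sum_distrib_left[symmetric] sum_lessThan_telescope')
  finally show ?thesis .
qed

lemma le_two_sqrt_mult_if_le_scaled_sum:
  fixes y \<alpha> \<beta> :: real
  assumes "0 \<le> \<alpha>" and "0 \<le> \<beta>" and le: "\<And>L. 0 < L \<Longrightarrow> y \<le> L * \<alpha> + \<beta> / L"
  shows "y \<le> 2 * sqrt (\<alpha> * \<beta>)"
proof (cases "0 < \<alpha> \<and> 0 < \<beta>")
  case True
  define L where "L = sqrt (\<beta> / \<alpha>)"
  have "0 < L" using True by (simp add: L_def)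
  moreover have "L * \<alpha> = sqrt (\<alpha> * \<beta>)" and "\<beta> / L = sqrt (\<alpha> * \<beta>)"
    using True by (simp_all add: L_def real_sqrt_divide real_sqrt_mult field_simps)
  ultimately show ?thesis using le by fastforce
next
  case False
  then have "\<alpha> = 0 \<or> \<beta> = 0" using assms(1,2) by linarith
  have "y \<le> 0 + e" if "0 < e" for e
  proof (cases "\<alpha> = 0")
    case True
    have "y \<le> \<beta> / ((\<beta> + 1) / e)" using le[of "(\<beta> + 1) / e"] True \<open>0 < e\<close> assms(2) by simp
    also have "\<dots> \<le> e" using \<open>0 < e\<close> assms(2) by (simp add: field_simps)
    finally show ?thesis by simp
  next
    case False
    with \<open>\<alpha> = 0 \<or> \<beta> = 0\<close> have "\<beta> = 0" by simp
    have "y \<le> e / (\<alpha> + 1) * \<alpha>" using le[of "e / (\<alpha> + 1)"] \<open>\<beta> = 0\<close> \<open>0 < e\<close> assms(1) by simp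
    also have "\<dots> \<le> e" using \<open>0 < e\<close> assms(1) by (simp add: field_simps)
    finally show ?thesis by simp
  qed
  then have "y \<le> 0" by (rule field_le_epsilon)
  with \<open>\<alpha> = 0 \<or> \<beta> = 0\<close> show ?thesis by auto
qed

lemma ennreal_le_two_sqrt_mult_if_le_scaled_sum:
  fixes \<alpha> \<beta> :: real
  assumes "0 \<le> \<alpha>" and "0 \<le> \<beta>" and le: "\<And>L. 0 < L \<Longrightarrow> y \<le> ennreal (L * \<alpha> + \<beta> / L)"
  shows "y \<le> ennreal (2 * sqrt (\<alpha> * \<beta>))"
proof -
  have "y \<noteq> \<infinity>" using le[of 1] by (auto simp: top_unique)
  then obtain y' where y: "y = ennreal y'" and "0 \<le> y'" by (cases y) auto
  have "y' \<le> L * \<alpha> + \<beta> / L" if "0 < L" for L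
  proof -
    have "0 \<le> L * \<alpha> + \<beta> / L" using assms(1,2) that by simp
    with le[OF that] show ?thesis by (simp add: y)
  qed
  then have "y' \<le> 2 * sqrt (\<alpha> * \<beta>)"
    by (rule le_two_sqrt_mult_if_le_scaled_sum[OF assms(1,2)])
  then show ?thesis by (simp add: y ennreal_leI)
qed

lemma subalgebra_past_sigma:
  assumes "\<And>i. xi i \<in> M \<rightarrow>\<^sub>M S"
  shows "subalgebra M (past_sigma M xi S t)"
proof -
  let ?A = "\<Union>i<t. {xi i -` A \<inter> space M | A. A \<in> sets S}"
  have "?A \<subseteq> sets M" using measurable_sets[OF assms] by blast
  moreover have "?A \<subseteq> Pow (space M)" by blast
  ultimately show ?thesis
    unfolding subalgebra_def past_sigma_def
    using sets.sigma_sets_subset sets_measure_of space_measure_of_conv by simp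
qed

lemma measurable_sample_comp:
  assumes "(\<lambda>p. h (fst p) (snd p)) \<in> (borel \<Otimes>\<^sub>M S) \<rightarrow>\<^sub>M N"
    and "X \<in> borel_measurable M" and "Y \<in> M \<rightarrow>\<^sub>M S"
  shows "(\<lambda>w. h (X w) (Y w)) \<in> M \<rightarrow>\<^sub>M N"
  using measurable_compose[OF measurable_Pair[OF assms(2,3)] assms(1)] by simp

context prob_space
begin

lemma nn_integral_le_if_nn_cond_exp_le:
  assumes "subalgebra M F" and [measurable]: "f \<in> borel_measurable M"
    and "AE w in M. nn_cond_exp M F f w \<le> ennreal C"
  shows "(\<integral>\<^sup>+w. f w \<partial>M) \<le> ennreal C"
proof -
  interpret finite_measure_subalgebra M F
    by unfold_locales (rule assms(1))
  have "(\<integral>\<^sup>+w. f w \<partial>M) = (\<integral>\<^sup>+w. 1 * nn_cond_exp M F f w \<partial>M)"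
    using nn_cond_exp_intg[of "\<lambda>_. 1" f] by simp
  also have "\<dots> \<le> (\<integral>\<^sup>+w. ennreal C \<partial>M)"
    using assms(3) by (intro nn_integral_mono_AE) auto
  finally show ?thesis by (simp add: emeasure_space_1)
qed

lemma nn_integral_le_const:
  assumes "\<And>w. w \<in> space M \<Longrightarrow> h w \<le> K"
  shows "(\<integral>\<^sup>+w. ennreal (h w) \<partial>M) \<le> ennreal K"
proof -
  have "(\<integral>\<^sup>+w. ennreal (h w) \<partial>M) \<le> (\<integral>\<^sup>+w. ennreal K \<partial>M)"
    using assms by (intro nn_integral_mono ennreal_leI) auto
  then show ?thesis by (simp add: emeasure_space_1)
qed

lemma nn_integral_le_affine:
  assumes [measurable]: "X \<in> borel_measurable M"
    and "\<And>w. w \<in> space M \<Longrightarrow> 0 \<le> X w"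
    and "(\<integral>\<^sup>+w. ennreal (X w) \<partial>M) \<le> ennreal m"
    and "0 \<le> m" and "0 \<le> \<alpha>" and "0 \<le> \<beta>"
    and "\<And>w. w \<in> space M \<Longrightarrow> Y w \<le> \<alpha> * X w + \<beta>"
  shows "(\<integral>\<^sup>+w. ennreal (Y w) \<partial>M) \<le> ennreal (\<alpha> * m + \<beta>)"
proof -
  have "(\<integral>\<^sup>+w. ennreal (Y w) \<partial>M) \<le> (\<integral>\<^sup>+w. ennreal \<alpha> * ennreal (X w) + ennreal \<beta> \<partial>M)"
  proof (rule nn_integral_mono)
    fix w assume w: "w \<in> space M"
    have "ennreal (Y w) \<le> ennreal (\<alpha> * X w + \<beta>)"
      using assms(7)[OF w] by (rule ennreal_leI)
    also have "\<dots> = ennreal \<alpha> * ennreal (X w) + ennreal \<beta>"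
      using assms(2)[OF w] assms(5,6) by (simp add: ennreal_mult ennreal_plus)
    finally show "ennreal (Y w) \<le> \<dots>" .
  qed
  also have "\<dots> = ennreal \<alpha> * (\<integral>\<^sup>+w. ennreal (X w) \<partial>M) + ennreal \<beta>"
    by (simp add: nn_integral_add nn_integral_cmult emeasure_space_1)
  also have "\<dots> \<le> ennreal \<alpha> * ennreal m + ennreal \<beta>"
    using assms(3) by (intro add_right_mono mult_left_mono) auto
  also have "\<dots> = ennreal (\<alpha> * m + \<beta>)"
    using assms(4,5,6) by (simp add: ennreal_mult ennreal_plus)
  finally show ?thesis .
qed

end

locale sg_sav_iteration = prob_space M for M :: "'w measure" +
  fixes S :: "'s measure" and xi :: "nat \<Rightarrow> 'w \<Rightarrow> 's"
    and fs :: "'a::euclidean_space \<Rightarrow> 's \<Rightarrow> real" and G :: "'a \<Rightarrow> 's \<Rightarrow> 'a"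
    and x :: "nat \<Rightarrow> 'w \<Rightarrow> 'a" and r :: "nat \<Rightarrow> 'w \<Rightarrow> real"
    and x0 :: 'a and r0 c \<eta> a B :: real
  assumes xi_meas: "\<And>t. xi t \<in> M \<rightarrow>\<^sub>M S"
    and fs_meas: "(\<lambda>p. fs (fst p) (snd p)) \<in> borel_measurable (borel \<Otimes>\<^sub>M S)"
    and G_meas: "(\<lambda>p. G (fst p) (snd p)) \<in> (borel \<Otimes>\<^sub>M S) \<rightarrow>\<^sub>M borel"
    and eta_pos: "0 < \<eta>"
    and a_pos: "0 < a"
    and fs_bounds: "\<And>y s. s \<in> space S \<Longrightarrow> a \<le> fs y s + c \<and> fs y s + c \<le> B"
    and x_init: "\<And>w. w \<in> space M \<Longrightarrow> x 0 w = x0"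
    and r_init: "\<And>w. w \<in> space M \<Longrightarrow> r 0 w = r0"
    and r0_pos: "0 < r0"
    and step_x: "\<And>t w. w \<in> space M \<Longrightarrow>
        x (Suc t) w = x t w - (\<eta> * r (Suc t) w / sqrt (fs (x t w) (xi t w) + c)) *\<^sub>R G (x t w) (xi t w)"
    and step_r: "\<And>t w. w \<in> space M \<Longrightarrow>
        r (Suc t) w = r t w + 1 / (2 * sqrt (fs (x t w) (xi t w) + c))
                      * (G (x t w) (xi t w) \<bullet> (x (Suc t) w - x t w))"
begin

abbreviation F_tilde :: "nat \<Rightarrow> 'w \<Rightarrow> real"
  where "F_tilde t w \<equiv> sqrt (fs (x t w) (xi t w) + c)"

abbreviation G_t :: "nat \<Rightarrow> 'w \<Rightarrow> 'a"
  where "G_t t w \<equiv> G (x t w) (xi t w)"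

lemma sample_value_bounds:
  assumes "w \<in> space M"
  shows "a \<le> fs (x t w) (xi t w) + c \<and> fs (x t w) (xi t w) + c \<le> B"
  using fs_bounds[OF measurable_space[OF xi_meas assms]] by blast

lemma F_tilde_sq_bounds:
  assumes "w \<in> space M"
  shows "a \<le> (F_tilde t w)\<^sup>2 \<and> (F_tilde t w)\<^sup>2 \<le> B"
  using sample_value_bounds[OF assms, of t] a_pos by simp

lemma F_tilde_pos: "w \<in> space M \<Longrightarrow> 0 < F_tilde t w"
  using sample_value_bounds[of w t] a_pos by simp

lemma B_pos: "0 < B"
proof -
  obtain w where "w \<in> space M" using not_empty by blast
  with F_tilde_sq_bounds[of w 0] a_pos show ?thesis by linarith
qed

lemma r_decrement:
  assumes "w \<in> space M"
  shows "r t w - r (Suc t) w = \<eta> * r (Suc t) w / (2 * (F_tilde t w)\<^sup>2) * (norm (G_t t w))\<^sup>2"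
  using step_x[OF assms] step_r[OF assms] by (rule sav_step_decrement)

lemma r_Suc_eq:
  assumes "w \<in> space M"
  shows "r (Suc t) w = r t w / (1 + \<eta> / (2 * (F_tilde t w)\<^sup>2) * (norm (G_t t w))\<^sup>2)"
  using r_decrement[OF assms, of t] eta_pos
  by (intro eq_divide_if_decrement) (simp_all add: algebra_simps)

lemma r_pos: "w \<in> space M \<Longrightarrow> 0 < r t w"
proof (induction t)
  case 0
  then show ?case by (simp add: r_init r0_pos)
next
  case (Suc t)
  have "0 \<le> \<eta> / (2 * (F_tilde t w)\<^sup>2) * (norm (G_t t w))\<^sup>2"
    using eta_pos by simp
  with Suc show ?case
    by (simp add: r_Suc_eq[OF Suc.prems, of t] add_pos_nonneg)
qed

lemma r_Suc_le:
  assumes "w \<in> space M"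
  shows "r (Suc t) w \<le> r t w"
proof -
  have "0 \<le> \<eta> * r (Suc t) w / (2 * (F_tilde t w)\<^sup>2) * (norm (G_t t w))\<^sup>2"
    using eta_pos r_pos[OF assms, of "Suc t"] by simp
  with r_decrement[OF assms, of t] show ?thesis by simp
qed

lemma r_le_r0: "w \<in> space M \<Longrightarrow> r t w \<le> r0"
proof (induction t)
  case (Suc t)
  then show ?case using r_Suc_le[of w t] by simp
qed (simp add: r_init)

lemma measurable_iterates: "x t \<in> borel_measurable M \<and> r t \<in> borel_measurable M"
proof (induction t)
  case 0
  have "x 0 \<in> borel_measurable M \<longleftrightarrow> (\<lambda>_. x0) \<in> borel_measurable M"
    by (rule measurable_cong) (simp add: x_init)
  moreover have "r 0 \<in> borel_measurable M \<longleftrightarrow> (\<lambda>_. r0) \<in> borel_measurable M"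
    by (rule measurable_cong) (simp add: r_init)
  ultimately show ?case by simp
next
  case (Suc t)
  then have [measurable]: "x t \<in> borel_measurable M" "r t \<in> borel_measurable M" by auto
  have [measurable]: "(\<lambda>w. fs (x t w) (xi t w)) \<in> borel_measurable M"
    by (rule measurable_sample_comp[OF fs_meas \<open>x t \<in> borel_measurable M\<close> xi_meas])
  have [measurable]: "G_t t \<in> borel_measurable M"
    by (rule measurable_sample_comp[OF G_meas \<open>x t \<in> borel_measurable M\<close> xi_meas])
  \<comment> \<open>\<open>r (Suc t)\<close> is defined only implicitly, via \<open>x (Suc t)\<close>; its explicit solution breaks the circle.\<close>
  have "r (Suc t) \<in> borel_measurable M \<longleftrightarrow>
      (\<lambda>w. r t w / (1 + \<eta> / (2 * (F_tilde t w)\<^sup>2) * (norm (G_t t w))\<^sup>2)) \<in> borel_measurable M"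
    by (intro measurable_cong) (simp add: r_Suc_eq)
  moreover have "(\<lambda>w. r t w / (1 + \<eta> / (2 * (F_tilde t w)\<^sup>2) * (norm (G_t t w))\<^sup>2)) \<in> borel_measurable M"
    by measurable
  ultimately have [measurable]: "r (Suc t) \<in> borel_measurable M" by simp
  have "x (Suc t) \<in> borel_measurable M \<longleftrightarrow>
      (\<lambda>w. x t w - (\<eta> * r (Suc t) w / F_tilde t w) *\<^sub>R G_t t w) \<in> borel_measurable M"
    by (intro measurable_cong) (simp add: step_x)
  moreover have "(\<lambda>w. x t w - (\<eta> * r (Suc t) w / F_tilde t w) *\<^sub>R G_t t w) \<in> borel_measurable M"
    by measurable
  ultimately show ?case using \<open>r (Suc t) \<in> borel_measurable M\<close> by simp
qed

lemma measurable_x [measurable]: "x t \<in> borel_measurable M"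
  using measurable_iterates by blast

lemma measurable_G_t [measurable]: "G_t t \<in> borel_measurable M"
  by (rule measurable_sample_comp[OF G_meas measurable_x xi_meas])

lemma r_Suc_mult_norm_G_t_sq:
  assumes "w \<in> space M"
  shows "r (Suc t) w * (norm (G_t t w))\<^sup>2 = 2 * (F_tilde t w)\<^sup>2 / \<eta> * (r t w - r (Suc t) w)"
  using r_decrement[OF assms, of t] F_tilde_pos[OF assms, of t] eta_pos by (simp add: field_simps)

lemma sum_r_norm_G_t_le:
  assumes "w \<in> space M"
  shows "(\<Sum>t<T. r (Suc t) w * (norm (G_t t w))\<^sup>2) \<le> 2 * r0 * B / \<eta>"
proof -
  have "r (Suc t) w * (norm (G_t t w))\<^sup>2 \<le> 2 * B / \<eta> * (r t w - r (Suc t) w)" for t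
    unfolding r_Suc_mult_norm_G_t_sq[OF assms]
    using F_tilde_sq_bounds[OF assms, of t] eta_pos r_Suc_le[OF assms, of t]
    by (intro mult_right_mono divide_right_mono) auto
  then have "(\<Sum>t<T. r (Suc t) w * (norm (G_t t w))\<^sup>2) \<le> 2 * B / \<eta> * (r 0 w - r T w)"
    by (rule sum_le_telescope)
  also have "\<dots> \<le> 2 * B / \<eta> * r0"
    using r_pos[OF assms, of T] r_init[OF assms] eta_pos B_pos by (intro mult_left_mono) auto
  finally show ?thesis by (simp add: field_simps)
qed

lemma sum_rho_norm_G_t_le:
  assumes "w \<in> space M"
  shows "(\<Sum>t<T. (r (Suc t) w / F_tilde t w)\<^sup>2 * (norm (G_t t w))\<^sup>2) \<le> 2 * r0\<^sup>2 / \<eta>"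
proof -
  have "(r (Suc t) w / F_tilde t w)\<^sup>2 * (norm (G_t t w))\<^sup>2 \<le> 2 * r0 / \<eta> * (r t w - r (Suc t) w)" for t
  proof -
    define q where "q = (F_tilde t w)\<^sup>2"
    have "0 < q" using F_tilde_pos[OF assms, of t] by (simp add: q_def)
    have "(r (Suc t) w / F_tilde t w)\<^sup>2 * (norm (G_t t w))\<^sup>2 = r (Suc t) w / q * (r (Suc t) w * (norm (G_t t w))\<^sup>2)"
      by (simp add: q_def power_divide power2_eq_square)
    also have "\<dots> = 2 * r (Suc t) w / \<eta> * (r t w - r (Suc t) w)"
      unfolding r_Suc_mult_norm_G_t_sq[OF assms] q_def[symmetric] using \<open>0 < q\<close> by simp
    also have "\<dots> \<le> 2 * r0 / \<eta> * (r t w - r (Suc t) w)"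
      using r_le_r0[OF assms, of "Suc t"] eta_pos r_Suc_le[OF assms, of t]
      by (intro mult_right_mono divide_right_mono) auto
    finally show ?thesis .
  qed
  then have "(\<Sum>t<T. (r (Suc t) w / F_tilde t w)\<^sup>2 * (norm (G_t t w))\<^sup>2) \<le> 2 * r0 / \<eta> * (r 0 w - r T w)"
    by (rule sum_le_telescope)
  also have "\<dots> \<le> 2 * r0 / \<eta> * r0"
    using r_pos[OF assms, of T] r_init[OF assms] eta_pos r0_pos by (intro mult_left_mono) auto
  finally show ?thesis by (simp add: power2_eq_square)
qed

lemma sum_r_inner_le:
  fixes e :: "nat \<Rightarrow> 'a"
  assumes "w \<in> space M" and "0 < L"
  shows "(\<Sum>t<T. r (Suc t) w * \<bar>e t \<bullet> G_t t w\<bar>)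
    \<le> L * r0 / 2 * (\<Sum>t<T. (norm (e t))\<^sup>2) + r0 * B / (L * \<eta>)"
proof -
  have "r (Suc t) w * \<bar>e t \<bullet> G_t t w\<bar>
      \<le> L * r0 / 2 * (norm (e t))\<^sup>2 + 1 / (2 * L) * (r (Suc t) w * (norm (G_t t w))\<^sup>2)" for t
  proof -
    define u v where "u = norm (e t)" and "v = norm (G_t t w)"
    have "0 \<le> (L * u - v)\<^sup>2" by simp
    then have young: "u * v \<le> L / 2 * u\<^sup>2 + 1 / (2 * L) * v\<^sup>2"
      using \<open>0 < L\<close> by (simp add: field_simps power2_eq_square)
    have "\<bar>e t \<bullet> G_t t w\<bar> \<le> u * v"
      unfolding u_def v_def by (rule Cauchy_Schwarz_ineq2)
    then have "r (Suc t) w * \<bar>e t \<bullet> G_t t w\<bar> \<le> r (Suc t) w * (L / 2 * u\<^sup>2 + 1 / (2 * L) * v\<^sup>2)"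
      using young r_pos[OF assms(1), of "Suc t"] by (intro mult_left_mono) auto
    also have "\<dots> \<le> r0 * (L / 2 * u\<^sup>2) + 1 / (2 * L) * (r (Suc t) w * v\<^sup>2)"
      using r_le_r0[OF assms(1), of "Suc t"] \<open>0 < L\<close> by (simp add: algebra_simps mult_right_mono)
    finally show ?thesis by (simp add: u_def v_def mult_ac)
  qed
  then have "(\<Sum>t<T. r (Suc t) w * \<bar>e t \<bullet> G_t t w\<bar>)
      \<le> (\<Sum>t<T. L * r0 / 2 * (norm (e t))\<^sup>2 + 1 / (2 * L) * (r (Suc t) w * (norm (G_t t w))\<^sup>2))"
    by (rule sum_mono)
  also have "\<dots> = L * r0 / 2 * (\<Sum>t<T. (norm (e t))\<^sup>2)
      + 1 / (2 * L) * (\<Sum>t<T. r (Suc t) w * (norm (G_t t w))\<^sup>2)"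
    by (simp add: sum.distrib sum_distrib_left)
  also have "\<dots> \<le> L * r0 / 2 * (\<Sum>t<T. (norm (e t))\<^sup>2) + 1 / (2 * L) * (2 * r0 * B / \<eta>)"
    using sum_r_norm_G_t_le[OF assms(1)] \<open>0 < L\<close> by (intro add_left_mono mult_left_mono) auto
  finally show ?thesis using \<open>0 < L\<close> by (simp add: field_simps)
qed

lemma nn_integral_sum_r_inner_le:
  fixes e :: "nat \<Rightarrow> 'w \<Rightarrow> 'a"
  assumes [measurable]: "\<And>t. e t \<in> borel_measurable M"
    and "0 \<le> \<sigma>0" and mse: "\<And>t. (\<integral>\<^sup>+w. ennreal ((norm (e t w))\<^sup>2) \<partial>M) \<le> ennreal (\<sigma>0\<^sup>2)"
  shows "(\<integral>\<^sup>+w. ennreal (\<Sum>t<T. r (Suc t) w * \<bar>e t w \<bullet> G_t t w\<bar>) \<partial>M)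
    \<le> ennreal (sqrt (real T) * \<sigma>0 * sqrt (2 * r0\<^sup>2 * B / \<eta>))"
proof -
  have sum_mse: "(\<integral>\<^sup>+w. ennreal (\<Sum>t<T. (norm (e t w))\<^sup>2) \<partial>M) \<le> ennreal (real T * \<sigma>0\<^sup>2)"
  proof -
    have "(\<integral>\<^sup>+w. ennreal (\<Sum>t<T. (norm (e t w))\<^sup>2) \<partial>M) = (\<integral>\<^sup>+w. (\<Sum>t<T. ennreal ((norm (e t w))\<^sup>2)) \<partial>M)"
      by (simp add: sum_ennreal)
    also have "\<dots> = (\<Sum>t<T. \<integral>\<^sup>+w. ennreal ((norm (e t w))\<^sup>2) \<partial>M)"
      by (rule nn_integral_sum) measurable
    also have "\<dots> \<le> (\<Sum>t<T. ennreal (\<sigma>0\<^sup>2))"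
      by (intro sum_mono mse)
    finally show ?thesis by (simp add: ennreal_of_nat_eq_real_of_nat ennreal_mult)
  qed
  define \<alpha> \<beta> where "\<alpha> = r0 * (real T * \<sigma>0\<^sup>2) / 2" and "\<beta> = r0 * B / \<eta>"
  have "(\<integral>\<^sup>+w. ennreal (\<Sum>t<T. r (Suc t) w * \<bar>e t w \<bullet> G_t t w\<bar>) \<partial>M) \<le> ennreal (2 * sqrt (\<alpha> * \<beta>))"
  proof (rule ennreal_le_two_sqrt_mult_if_le_scaled_sum)
    fix L :: real assume "0 < L"
    have "(\<integral>\<^sup>+w. ennreal (\<Sum>t<T. r (Suc t) w * \<bar>e t w \<bullet> G_t t w\<bar>) \<partial>M)
        \<le> ennreal (L * r0 / 2 * (real T * \<sigma>0\<^sup>2) + r0 * B / (L * \<eta>))"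
    proof (rule nn_integral_le_affine[OF _ _ sum_mse])
      show "(\<lambda>w. \<Sum>t<T. (norm (e t w))\<^sup>2) \<in> borel_measurable M"
        by measurable
      show "\<And>w. w \<in> space M \<Longrightarrow> (\<Sum>t<T. r (Suc t) w * \<bar>e t w \<bullet> G_t t w\<bar>)
          \<le> L * r0 / 2 * (\<Sum>t<T. (norm (e t w))\<^sup>2) + r0 * B / (L * \<eta>)"
        using sum_r_inner_le[OF _ \<open>0 < L\<close>] .
    qed (use \<open>0 < L\<close> r0_pos B_pos eta_pos in \<open>simp_all add: sum_nonneg\<close>)
    also have "L * r0 / 2 * (real T * \<sigma>0\<^sup>2) + r0 * B / (L * \<eta>) = L * \<alpha> + \<beta> / L"
      by (simp add: \<alpha>_def \<beta>_def mult_ac)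
    finally show "(\<integral>\<^sup>+w. ennreal (\<Sum>t<T. r (Suc t) w * \<bar>e t w \<bullet> G_t t w\<bar>) \<partial>M)
        \<le> ennreal (L * \<alpha> + \<beta> / L)" .
  qed (use r0_pos B_pos eta_pos in \<open>simp_all add: \<alpha>_def \<beta>_def\<close>)
  also have "2 * sqrt (\<alpha> * \<beta>) = sqrt (real T) * \<sigma>0 * sqrt (2 * r0\<^sup>2 * B / \<eta>)"
  proof -
    have "2 * sqrt (\<alpha> * \<beta>) = sqrt (4 * (\<alpha> * \<beta>))"
      by (simp add: real_sqrt_mult)
    also have "4 * (\<alpha> * \<beta>) = real T * \<sigma>0\<^sup>2 * (2 * r0\<^sup>2 * B / \<eta>)"
      by (simp add: \<alpha>_def \<beta>_def power2_eq_square)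
    finally show ?thesis
      using \<open>0 \<le> \<sigma>0\<close> by (simp only: real_sqrt_mult real_sqrt_abs abs_of_nonneg)
  qed
  finally show ?thesis .
qed

end

theorem mainTheorem6:
  fixes M :: "'w measure" and S :: "'s measure"
    and xi :: "nat \<Rightarrow> 'w \<Rightarrow> 's"
    and f :: "'a::euclidean_space \<Rightarrow> real" and gradf :: "'a \<Rightarrow> 'a"
    and fs :: "'a \<Rightarrow> 's \<Rightarrow> real" and G :: "'a \<Rightarrow> 's \<Rightarrow> 'a"
    and x :: "nat \<Rightarrow> 'w \<Rightarrow> 'a" and r :: "nat \<Rightarrow> 'w \<Rightarrow> real"
    and x0 :: 'a and c \<eta> a B \<sigma>0 :: real
  assumes prob: "prob_space M"
    and xi_meas: "\<And>t. xi t \<in> M \<rightarrow>\<^sub>M S"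
    and fs_meas: "(\<lambda>p. fs (fst p) (snd p)) \<in> borel_measurable (borel \<Otimes>\<^sub>M S)"
    and G_meas: "(\<lambda>p. G (fst p) (snd p)) \<in> (borel \<Otimes>\<^sub>M S) \<rightarrow>\<^sub>M borel"
    and "\<And>y. (f has_derivative (\<lambda>h. gradf y \<bullet> h)) (at y)"
    and gradf_cont: "continuous_on UNIV gradf"
    and "c \<ge> 0"
    and "(INF y. f y) > - c"
    and eta_pos: "\<eta> > 0"
    and sigma0_nonneg: "\<sigma>0 \<ge> 0"
    and x_init: "\<And>w. w \<in> space M \<Longrightarrow> x 0 w = x0"
    and r_init: "\<And>w. w \<in> space M \<Longrightarrow> r 0 w = sqrt (f x0 + c)"
    and step_x: "\<And>t w. w \<in> space M \<Longrightarrow>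
        x (Suc t) w = x t w - (\<eta> * r (Suc t) w / sqrt (fs (x t w) (xi t w) + c)) *\<^sub>R G (x t w) (xi t w)"
    and step_r: "\<And>t w. w \<in> space M \<Longrightarrow>
        r (Suc t) w = r t w + 1 / (2 * sqrt (fs (x t w) (xi t w) + c))
                      * (G (x t w) (xi t w) \<bullet> (x (Suc t) w - x t w))"
    and A3: "\<And>t. AE w in M. nn_cond_exp M (past_sigma M xi S t)
                 (\<lambda>w. ennreal ((norm (G (x t w) (xi t w) - gradf (x t w)))\<^sup>2)) w
               \<le> ennreal (\<sigma>0\<^sup>2)"
    and a_pos: "0 < a" and a_le_B: "a \<le> B"
    and A4_f: "\<And>y. a \<le> f y + c \<and> f y + c \<le> B"
    and A4_fs: "\<And>y s. s \<in> space S \<Longrightarrow> a \<le> fs y s + c \<and> fs y s + c \<le> B"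
  shows
    "(\<forall>t. \<forall>w\<in>space M.
        r t w > 0 \<and> r (Suc t) w \<le> r t w \<and>
        r t w - r (Suc t) w = \<eta> * r (Suc t) w / (2 * (sqrt (fs (x t w) (xi t w) + c))\<^sup>2)
                                * (norm (G (x t w) (xi t w)))\<^sup>2)
     \<and> (\<forall>T::nat. T \<ge> 1 \<longrightarrow>
        (\<integral>\<^sup>+ w. ennreal (\<Sum>t<T. r (Suc t) w * (norm (G (x t w) (xi t w)))\<^sup>2) \<partial>M)
           \<le> ennreal (2 * sqrt (f x0 + c) * B / \<eta>)
      \<and> (\<integral>\<^sup>+ w. ennreal (\<Sum>t<T. (r (Suc t) w / sqrt (fs (x t w) (xi t w) + c))\<^sup>2
                                   * (norm (G (x t w) (xi t w)))\<^sup>2) \<partial>M)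
           \<le> ennreal (2 * (f x0 + c) * B / (a * \<eta>))
      \<and> (\<integral>\<^sup>+ w. ennreal (\<Sum>t<T. r (Suc t) w
                 * \<bar>(gradf (x t w) - G (x t w) (xi t w)) \<bullet> G (x t w) (xi t w)\<bar>) \<partial>M)
           \<le> ennreal (sqrt (real T) * \<sigma>0 * sqrt (2 * (f x0 + c) * B / \<eta>)))"
proof -
  define r0 where "r0 = sqrt (f x0 + c)"
  have r0_sq: "r0\<^sup>2 = f x0 + c" and r0_pos: "0 < r0"
    using A4_f[of x0] a_pos by (simp_all add: r0_def)
  interpret sg_sav_iteration M S xi fs G x r x0 r0 c \<eta> a B
    by (intro sg_sav_iteration.intro sg_sav_iteration_axioms.intro)
      (fact prob xi_meas fs_meas G_meas eta_pos a_pos A4_fs x_init step_x step_r r0_pos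
        | simp add: r_init r0_def)+
  have gradf_meas [measurable]: "gradf \<in> borel_measurable borel"
    by (rule borel_measurable_continuous_onI[OF gradf_cont])
  have mse: "(\<integral>\<^sup>+w. ennreal ((norm (gradf (x t w) - G_t t w))\<^sup>2) \<partial>M) \<le> ennreal (\<sigma>0\<^sup>2)" for t
    using nn_integral_le_if_nn_cond_exp_le[OF subalgebra_past_sigma[OF xi_meas] _ A3[of t]]
    by (simp add: norm_minus_commute)
  have rho_bound: "2 * r0\<^sup>2 / \<eta> \<le> 2 * (f x0 + c) * B / (a * \<eta>)"
  proof -
    have "2 * r0\<^sup>2 / \<eta> * 1 \<le> 2 * r0\<^sup>2 / \<eta> * (B / a)"
      using a_pos a_le_B eta_pos by (intro mult_left_mono) auto
    then show ?thesis using a_pos by (simp add: r0_sq field_simps)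
  qed
  show ?thesis
  proof (intro conjI allI ballI impI)
    fix t w assume "w \<in> space M"
    then show "0 < r t w" "r (Suc t) w \<le> r t w"
      and "r t w - r (Suc t) w = \<eta> * r (Suc t) w / (2 * (F_tilde t w)\<^sup>2) * (norm (G_t t w))\<^sup>2"
      by (rule r_pos r_Suc_le r_decrement)+
  next
    fix T :: nat
    show "(\<integral>\<^sup>+w. ennreal (\<Sum>t<T. r (Suc t) w * (norm (G_t t w))\<^sup>2) \<partial>M) \<le> ennreal (2 * sqrt (f x0 + c) * B / \<eta>)"
      unfolding r0_def[symmetric] by (intro nn_integral_le_const sum_r_norm_G_t_le)
    show "(\<integral>\<^sup>+w. ennreal (\<Sum>t<T. (r (Suc t) w / F_tilde t w)\<^sup>2 * (norm (G_t t w))\<^sup>2) \<partial>M)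
        \<le> ennreal (2 * (f x0 + c) * B / (a * \<eta>))"
      using sum_rho_norm_G_t_le rho_bound by (intro nn_integral_le_const) (blast intro: order_trans)
    show "(\<integral>\<^sup>+w. ennreal (\<Sum>t<T. r (Suc t) w * \<bar>(gradf (x t w) - G_t t w) \<bullet> G_t t w\<bar>) \<partial>M)
        \<le> ennreal (sqrt (real T) * \<sigma>0 * sqrt (2 * (f x0 + c) * B / \<eta>))"
      using nn_integral_sum_r_inner_le[OF _ sigma0_nonneg mse] unfolding r0_sq by measurable
  qed
qed

end
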